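(* Let $p,q$ be positive integers and let $s_1,\dots,s_p,d_1,\dots,d_q:[0,1]\to[0,1]$ be the truth functions of the hedge connectives of FLn with many hedges; that is, writing $s_0=d_0=\mathrm{id}_{[0,1]}$, for all $a,b\in[0,1]$: (1) $a\Rightarrow b\ \le\ h(a)\Rightarrow h(b)$ for every $h\in\{s_1,\dots,s_p,d_1,\dots,d_q\}$; (2) $s_i(a)\le s_{i-1}(a)$ for $i=1,\dots,p$; (3) $s_p(1)=1$; (4) $d_{j-1}(a)\le d_j(a)$ for $j=1,\dots,q$; (5) $d_q(0)=0$. Then for every $j=1,\dots,q$, $d_j$ is superdiagonal, i.e. $d_j(a)\ge a$ for all $a\in[0,1]$.
   Context: Truth values form the Łukasiewicz algebra on $[0,1]$ with $a\Rightarrow b=\min(1,1-a+b)$. FLn with many hedges extends the first-order fuzzy logic FLn (with logical constants $\overline{a}$ for each $a\in[0,1]$) by truth-stressing hedges $s_1,\dots,s_p$ and truth-depressing hedges $d_1,\dots,d_q$ ($s_0,d_0$ denote the identity), with degree-1 logical axioms $(A\to B)\to(hA\to hB)$, $s_iA\to s_{i-1}A$, $s_p\overline{1}$, $d_{j-1}A\to d_jA$, $\neg d_q\overline{0}$. Conditions (1)–(5) express that these axioms have truth value 1 in every structure, where $\mathcal{D}(hA)=h(\mathcal{D}(A))$. *)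

theory Defs
  imports Main "HOL.Real"
begin

definition luk_imp :: "real \<Rightarrow> real \<Rightarrow> real" where
  "luk_imp a b = min 1 (1 - a + b)"

end

theory Submission
  imports Defs
begin

text \<open>Since \<open>d\<^sub>0\<close> is the identity and the depressing hedges form the pointwise increasing chain
  \<open>d\<^sub>0 \<le> d\<^sub>1 \<le> \<dots> \<le> d\<^sub>q\<close>, every \<open>d\<^sub>j\<close> lies above the identity; none of the other axioms is needed.\<close>

lemma bounded_chain_le_from_zero:
  fixes f :: "nat \<Rightarrow> 'a::preorder"
  assumes step: "\<And>j. 1 \<le> j \<Longrightarrow> j \<le> n \<Longrightarrow> f (j - 1) \<le> f j"
    and "j \<le> n"
  shows "f 0 \<le> f j"
  using \<open>j \<le> n\<close>
proof (induction j)
  case 0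
  show ?case by simp
next
  case (Suc j)
  then have "f 0 \<le> f j" by simp
  also have "f j \<le> f (Suc j)" using step[of "Suc j"] Suc.prems by simp
  finally show ?case .
qed

theorem mainTheorem3:
  fixes p q :: nat and s d :: "nat \<Rightarrow> real \<Rightarrow> real"
  assumes pq: "p \<ge> 1" "q \<ge> 1"
    and s0: "\<And>a. a \<in> {0..1} \<Longrightarrow> s 0 a = a"
    and d0: "\<And>a. a \<in> {0..1} \<Longrightarrow> d 0 a = a"
    and s_range: "\<And>i a. 1 \<le> i \<Longrightarrow> i \<le> p \<Longrightarrow> a \<in> {0..1} \<Longrightarrow> s i a \<in> {0..1}"
    and d_range: "\<And>j a. 1 \<le> j \<Longrightarrow> j \<le> q \<Longrightarrow> a \<in> {0..1} \<Longrightarrow> d j a \<in> {0..1}"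
    and ax1s: "\<And>i a b. 1 \<le> i \<Longrightarrow> i \<le> p \<Longrightarrow> a \<in> {0..1} \<Longrightarrow> b \<in> {0..1} \<Longrightarrow>
                 luk_imp a b \<le> luk_imp (s i a) (s i b)"
    and ax1d: "\<And>j a b. 1 \<le> j \<Longrightarrow> j \<le> q \<Longrightarrow> a \<in> {0..1} \<Longrightarrow> b \<in> {0..1} \<Longrightarrow>
                 luk_imp a b \<le> luk_imp (d j a) (d j b)"
    and ax2: "\<And>i a. 1 \<le> i \<Longrightarrow> i \<le> p \<Longrightarrow> a \<in> {0..1} \<Longrightarrow> s i a \<le> s (i - 1) a"
    and ax3: "s p 1 = 1"
    and ax4: "\<And>j a. 1 \<le> j \<Longrightarrow> j \<le> q \<Longrightarrow> a \<in> {0..1} \<Longrightarrow> d (j - 1) a \<le> d j a"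
    and ax5: "d q 0 = 0"
  shows "\<forall>j. 1 \<le> j \<and> j \<le> q \<longrightarrow> (\<forall>a \<in> {0..1}. a \<le> d j a)"
proof (intro allI impI ballI)
  fix j and a :: real
  assume j: "1 \<le> j \<and> j \<le> q" and a: "a \<in> {0..1}"
  have "a = d 0 a" using d0[OF a] by simp
  also have "\<dots> \<le> d j a"
    using bounded_chain_le_from_zero[of q "\<lambda>k. d k a" j] ax4 a j by simp
  finally show "a \<le> d j a" .
qed

end
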